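(* Let $1\leq e_1\leq\cdots\leq e_m$ be integers, let $b_i$ be integers with $0\leq b_i\leq e_i-1$ for $i=1,\ldots,m$, and let $b_0\geq1$ be an integer. Then for every $k=0,\ldots,m-1$, $$\prod_{i=1}^m(e_i-b_i)\geq\Big(\sum_{i=1}^{k+1}(e_i-b_i)-(k-1)-b_0-\sum_{i=k+2}^m b_i\Big)e_{k+2}\cdots e_m,$$ where for $k=m-1$ the product $e_{k+2}\cdots e_m$ is $1$ and the sum $\sum_{i=k+2}^m b_i$ is $0$. *)

theory Defs
  imports Main
begin

end

theory Submission
  imports Defs
begin

text \<open>
  Put \<open>a\<^sub>i = e\<^sub>i - b\<^sub>i\<close> for \<open>i \<le> k+1\<close>, and \<open>x\<^sub>j = e\<^sub>j - b\<^sub>j \<le> y\<^sub>j = e\<^sub>j\<close> for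
  \<open>j \<ge> k+2\<close>. By monotonicity every \<open>a\<^sub>i\<close> is at most \<open>f = e(k+1)\<close>, and every \<open>y\<^sub>j\<close> at
  least \<open>f\<close>. Since \<open>b\<^sub>0 \<ge> 1\<close>, it suffices to show
  \<open>(1 + \<Sum>(a\<^sub>i - 1) - \<Sum>(y\<^sub>j - x\<^sub>j)) \<Prod>y\<^sub>j \<le> \<Prod>a\<^sub>i \<Prod>x\<^sub>j\<close>.
  This is proved by peeling off factors: an \<open>a\<close> alone when the remaining balance
  \<open>V\<close> is at least 1 (as \<open>V + a - 1 \<le> a V\<close>), a pair \<open>(x, y)\<close> alone when the remaining
  balance \<open>W\<close> is at most \<open>y\<close> (as \<open>(W + x - y) y \<le> x W\<close>), and otherwise an \<open>a\<close>
  together with a pair \<open>(x, y)\<close>.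
\<close>

lemma excess_mult_le:
  fixes a v y r :: "'a::linordered_idom"
  assumes "v * y \<le> r" "1 \<le> a" "1 \<le> v" "0 \<le> y"
  shows "(v + a - 1) * y \<le> a * r"
proof -
  have "0 \<le> (a - 1) * (v - 1)" using assms by simp
  then have "v + a - 1 \<le> a * v" by (simp add: algebra_simps)
  then have "(v + a - 1) * y \<le> a * (v * y)"
    using assms(4) by (metis mult.assoc mult_right_mono)
  also have "\<dots> \<le> a * r" using assms by (simp add: mult_left_mono)
  finally show ?thesis .
qed

lemma shortfall_mult_le:
  fixes w x y z r :: "'a::linordered_idom"
  assumes "w * z \<le> r" "w \<le> y" "0 \<le> x" "x \<le> y" "0 \<le> z" "0 \<le> r"
  shows "(w + x - y) * (y * z) \<le> x * r"
proof (cases "0 \<le> w")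
  case True
  have "0 \<le> (y - x) * (y - w)" using assms by simp
  then have "(w + x - y) * y \<le> x * w" by (simp add: algebra_simps)
  then have "(w + x - y) * (y * z) \<le> x * (w * z)"
    using assms(5) by (metis mult.assoc mult_right_mono)
  also have "\<dots> \<le> x * r" using assms by (simp add: mult_left_mono)
  finally show ?thesis .
next
  case False
  then have "(w + x - y) * (y * z) \<le> 0"
    using assms by (intro mult_nonpos_nonneg) auto
  also have "0 \<le> x * r" using assms by simp
  finally show ?thesis .
qed

lemma pairing_mult_le:
  fixes a w x y z r :: "'a::linordered_idom"
  assumes "w * z \<le> r" "1 \<le> w" "w \<le> y" "1 \<le> a" "a \<le> y" "1 \<le> x" "x \<le> y" "0 \<le> z"
  shows "(w + a - 1 + x - y) * (y * z) \<le> a * x * r"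
proof -
  have "(w + a - 1 + x - y) * y \<le> a * x * w"
  proof (cases "y = 1")
    case True
    then show ?thesis using assms by (simp add: order_antisym)
  next
    case False
    \<comment> \<open>The difference of the two sides is affine in x and nonnegative at x = 1 and at x = y.\<close>
    have "(y - 1) * (a * x * w - (w + a - 1 + x - y) * y)
        = (y - x) * ((y - a) * (y - w)) + (x - 1) * (y * ((a - 1) * (w - 1)))"
      by (simp add: algebra_simps)
    also have "0 \<le> \<dots>" using assms by simp
    finally show ?thesis using False assms by (simp add: zero_le_mult_iff)
  qed
  then have "(w + a - 1 + x - y) * (y * z) \<le> a * x * (w * z)"
    using assms(8) by (metis mult.assoc mult_right_mono)
  also have "\<dots> \<le> a * x * r" using assms by (simp add: mult_left_mono)
  finally show ?thesis .
qed

definition balance :: "int list \<Rightarrow> (int \<times> int) list \<Rightarrow> int" where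
  "balance as ts = 1 + (\<Sum>a\<leftarrow>as. a - 1) - (\<Sum>t\<leftarrow>ts. snd t - fst t)"

lemma balance_Cons_left [simp]: "balance (a # as) ts = balance as ts + a - 1"
  by (simp add: balance_def)

lemma balance_Cons_right [simp]: "balance as ((x, y) # ts) = balance as ts + x - y"
  by (simp add: balance_def)

lemma balance_Nil_right_ge: "\<forall>a\<in>set as. 1 \<le> a \<Longrightarrow> 1 \<le> balance as []"
  unfolding balance_def by (induction as) auto

lemma balance_Nil_left_le: "\<forall>(x, y)\<in>set ts. x \<le> y \<Longrightarrow> balance [] ts \<le> 1"
  unfolding balance_def by (induction ts) auto

lemma balance_cases:
  assumes "\<forall>a\<in>set as. 1 \<le> a" and "\<forall>(x, y)\<in>set ts. 1 \<le> x \<and> x \<le> y"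
  obtains (excess) a as' where "as = a # as'" "1 \<le> balance as' ts"
    | (empty) "ts = []" "as = []"
    | (shortfall) x y ts' where "ts = (x, y) # ts'" "balance as ts' \<le> y"
    | (pairing) a as' x y ts' where "as = a # as'" "ts = (x, y) # ts'"
        "y < balance as ts'" "balance as' ts < 1"
proof (cases "\<exists>a as'. as = a # as' \<and> 1 \<le> balance as' ts")
  case True
  then show thesis using excess by blast
next
  case no_excess: False
  show thesis
  proof (cases ts)
    case Nil
    then show thesis using no_excess empty assms(1) balance_Nil_right_ge[of "tl as"]
      by (cases as) auto
  next
    case (Cons t ts')
    obtain x y where t: "t = (x, y)" by force
    show thesis
    proof (cases "balance as ts' \<le> y")
      case True
      then show thesis using shortfall Cons t by blast
    next
      case large: False
      have "1 \<le> y" using assms(2) Cons t by auto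
      then have "as \<noteq> []" using large balance_Nil_left_le[of ts'] assms(2) Cons by fastforce
      then show thesis using pairing no_excess large Cons t by (cases as) auto
    qed
  qed
qed

lemma balance_mult_le_prod_list:
  fixes as :: "int list" and ts :: "(int \<times> int) list" and f :: int
  assumes "\<forall>a\<in>set as. 1 \<le> a \<and> a \<le> f"
    and "\<forall>(x, y)\<in>set ts. 1 \<le> x \<and> x \<le> y \<and> f \<le> y"
  shows "balance as ts * (\<Prod>t\<leftarrow>ts. snd t) \<le> prod_list as * (\<Prod>t\<leftarrow>ts. fst t)"
  using assms
proof (induction "length as + length ts" arbitrary: as ts rule: less_induct)
  case less
  have as_nonneg: "0 \<le> prod_list as"
    using less.prems(1) by (intro prod_list_nonneg) force
  have ts_nonneg: "0 \<le> (\<Prod>t\<leftarrow>ts'. fst t)" "0 \<le> (\<Prod>t\<leftarrow>ts'. snd t)" if "set ts' \<subseteq> set ts" for ts'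
    using less.prems(2) that by (auto intro!: prod_list_nonneg) fastforce+
  have "\<forall>a\<in>set as. 1 \<le> a" "\<forall>(x, y)\<in>set ts. 1 \<le> x \<and> x \<le> y"
    using less.prems by auto
  then show ?case
  proof (cases rule: balance_cases)
    case (excess a as')
    have "(balance as' ts + a - 1) * (\<Prod>t\<leftarrow>ts. snd t) \<le> a * (prod_list as' * (\<Prod>t\<leftarrow>ts. fst t))"
      using less.hyps[of as' ts] less.prems ts_nonneg(2)[of ts] excess
      by (intro excess_mult_le) auto
    then show ?thesis using excess by (simp add: algebra_simps)
  next
    case empty
    then show ?thesis by (simp add: balance_def)
  next
    case (shortfall x y ts')
    have "(balance as ts' + x - y) * (y * (\<Prod>t\<leftarrow>ts'. snd t)) \<le> x * (prod_list as * (\<Prod>t\<leftarrow>ts'. fst t))"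
      using less.hyps[of as ts'] less.prems ts_nonneg[of ts'] as_nonneg shortfall
        set_subset_Cons[of ts' "(x, y)"]
      by (intro shortfall_mult_le) auto
    then show ?thesis using shortfall by (simp add: algebra_simps)
  next
    case (pairing a as' x y ts')
    have "(balance as' ts' + a - 1 + x - y) * (y * (\<Prod>t\<leftarrow>ts'. snd t))
        \<le> a * x * (prod_list as' * (\<Prod>t\<leftarrow>ts'. fst t))"
      using less.hyps[of as' ts'] less.prems ts_nonneg(2)[of ts'] pairing
        set_subset_Cons[of ts' "(x, y)"]
      by (intro pairing_mult_le) auto
    then show ?thesis using pairing by (simp add: algebra_simps)
  qed
qed

lemma balance_mult_le_prod_interval:
  fixes x y :: "nat \<Rightarrow> int" and n m :: nat and f :: int
  assumes "n \<le> m"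
    and "\<forall>i\<in>{1..n}. 1 \<le> x i \<and> x i \<le> f"
    and "\<forall>j\<in>{n+1..m}. 1 \<le> x j \<and> x j \<le> y j \<and> f \<le> y j"
  shows "(1 + (\<Sum>i=1..n. x i - 1) - (\<Sum>j=n+1..m. y j - x j)) * (\<Prod>j=n+1..m. y j)
    \<le> (\<Prod>i=1..m. x i)"
proof -
  define as where "as = map x [1..<n+1]"
  define ts where "ts = map (\<lambda>j. (x j, y j)) [n+1..<m+1]"
  have "balance as ts * (\<Prod>t\<leftarrow>ts. snd t) \<le> prod_list as * (\<Prod>t\<leftarrow>ts. fst t)"
    using assms(2,3) unfolding as_def ts_def
    by (intro balance_mult_le_prod_list[where f = f]) auto
  moreover have "(\<Prod>i=1..n. x i) * (\<Prod>j=n+1..m. x j) = (\<Prod>i=1..m. x i)"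
    using prod.atLeastLessThan_concat[of 1 "n+1" "m+1" x] assms(1)
    by (simp add: atLeastLessThanSuc_atLeastAtMost)
  moreover have "sum_list (map g [i..<j]) = sum g {i..<j}" "prod_list (map g [i..<j]) = prod g {i..<j}"
    for g :: "nat \<Rightarrow> int" and i j
    by (simp_all flip: sum.distinct_set_conv_list prod.distinct_set_conv_list)
  ultimately show ?thesis
    unfolding as_def ts_def balance_def
    by (simp only: map_map o_def fst_conv snd_conv atLeastLessThanSuc_atLeastAtMost Suc_eq_plus1[symmetric])
qed

theorem proposition5p6:
  fixes m k :: nat and e b :: "nat \<Rightarrow> int" and b0 :: int
  assumes e_pos: "\<forall>i\<in>{1..m}. 1 \<le> e i"
    and e_mono: "\<forall>i j. 1 \<le> i \<and> i \<le> j \<and> j \<le> m \<longrightarrow> e i \<le> e j"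
    and b_bounds: "\<forall>i\<in>{1..m}. 0 \<le> b i \<and> b i \<le> e i - 1"
    and b0_pos: "b0 \<ge> 1"
    and k_range: "k \<le> m - 1" and m_pos: "m \<ge> 1"
  shows "(\<Prod>i=1..m. e i - b i) \<ge>
    ((\<Sum>i=1..k+1. e i - b i) - (int k - 1) - b0 - (\<Sum>i=k+2..m. b i))
      * (\<Prod>i=k+2..m. e i)"
proof -
  have "k + 1 \<le> m" using k_range m_pos by simp
  have "1 \<le> e i - b i \<and> e i - b i \<le> e (k+1)" if "i \<in> {1..k+1}" for i
    using that \<open>k + 1 \<le> m\<close> b_bounds[rule_format, of i] e_mono[rule_format, of i "k+1"] by auto
  moreover have "1 \<le> e j - b j \<and> e j - b j \<le> e j \<and> e (k+1) \<le> e j" if "j \<in> {k+1+1..m}" for j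
    using that b_bounds[rule_format, of j] e_mono[rule_format, of "k+1" j] by auto
  ultimately have "(1 + (\<Sum>i=1..k+1. e i - b i - 1) - (\<Sum>j=k+1+1..m. e j - (e j - b j)))
      * (\<Prod>j=k+1+1..m. e j) \<le> (\<Prod>i=1..m. e i - b i)"
    using balance_mult_le_prod_interval[where n = "k+1" and x = "\<lambda>i. e i - b i" and y = e]
      \<open>k + 1 \<le> m\<close> by blast
  then have "(1 + (\<Sum>i=1..k+1. e i - b i - 1) - (\<Sum>j=k+2..m. b j)) * (\<Prod>j=k+2..m. e j)
      \<le> (\<Prod>i=1..m. e i - b i)"
    by (simp add: numeral_2_eq_2)
  moreover have "(\<Sum>i=1..k+1. e i - b i) - (int k - 1) - b0 - (\<Sum>i=k+2..m. b i)
      \<le> 1 + (\<Sum>i=1..k+1. e i - b i - 1) - (\<Sum>j=k+2..m. b j)"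
    using b0_pos by (simp add: sum_subtractf)
  moreover have "0 \<le> (\<Prod>i=k+2..m. e i)"
  proof (rule prod_nonneg)
    fix i assume "i \<in> {k+2..m}"
    then show "0 \<le> e i" using e_pos[rule_format, of i] by simp
  qed
  ultimately show ?thesis
    by (meson mult_right_mono order_trans)
qed

end
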